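(* Let $r\ge1$ be an integer and $N(u)=(1-u^{-1})^r$. Then (a) $\zeta_N(s)=\zeta_{\mathbb G_m^r/\mathbb F_1}(s+r)$; (b) $\zeta_{N^*}(s)=\zeta_{\mathbb G_m^r/\mathbb F_1}(s)^{(-1)^r}$; (c) $\zeta_{\mathbb G_m^r/\mathbb F_1}(r-s)=\zeta_{\mathbb G_m^r/\mathbb F_1}(s)^{(-1)^r}$.
   Context: For measurable $N:(1,\infty)\to\mathbb C$ let $Z_N(w,s)=\frac1{\Gamma(w)}\int_1^\infty\frac{N(u)}{u^{s+1}}(\log u)^{w-1}du$ (convergent for $\operatorname{Re}(s)$ large and $w$ in an open domain, extended holomorphically to $w=0$), and $\zeta_N(s)=\exp\big(\frac{\partial}{\partial w}Z_N(w,s)\big|_{w=0}\big)$, continued meromorphically in $s$; $N^*(u)=N(1/u)$. $\zeta_{\mathbb G_m^r/\mathbb F_1}$ is the Soulé zeta function of the counting polynomial $(x-1)^r=\sum_k a_kx^k$ of $\mathbb G_m^r$, i.e. $\zeta_{\mathbb G_m^r/\mathbb F_1}(s)=\prod_{k=0}^r(s-k)^{-a_k}$ with $a_k=\binom rk(-1)^{r-k}$. *)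

theory Defs
  imports "HOL-Analysis.Analysis"
begin

definition Z_fun :: "(real \<Rightarrow> complex) \<Rightarrow> complex \<Rightarrow> complex \<Rightarrow> complex" where
  "Z_fun N w s =
     (LINT u:{1<..}|lborel. N u * (complex_of_real u) powr (-(s + 1))
                            * (complex_of_real (ln u)) powr (w - 1)) / Gamma w"

definition Z_integrable :: "(real \<Rightarrow> complex) \<Rightarrow> complex \<Rightarrow> complex \<Rightarrow> bool" where
  "Z_integrable N w s =
     set_integrable lborel {1<..}
       (\<lambda>u. N u * (complex_of_real u) powr (-(s + 1)) * (complex_of_real (ln u)) powr (w - 1))"

text \<open>zeta_N(s) = exp(d/dw Z_N(w,s) at w=0), where w \<mapsto> Z_N(w,s) is extended holomorphically
  from its domain of convergence (intersected with Re w > 0) to an open set containing 0.\<close>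
definition zeta_N :: "(real \<Rightarrow> complex) \<Rightarrow> complex \<Rightarrow> complex" where
  "zeta_N N s = exp (THE d. \<exists>g U. open U \<and> 0 \<in> U \<and> g holomorphic_on U \<and>
       (\<forall>w\<in>U. 0 < Re w \<longrightarrow> Z_integrable N w s \<and> g w = Z_fun N w s) \<and> d = deriv g 0)"

definition a_coeff :: "nat \<Rightarrow> nat \<Rightarrow> int" where
  "a_coeff r k = int (r choose k) * (-1) ^ (r - k)"

definition zeta_Gm :: "nat \<Rightarrow> complex \<Rightarrow> complex" where
  "zeta_Gm r s = (\<Prod>k\<in>{0..r}. (s - of_nat k) powi (- a_coeff r k))"

end

theory Submission
  imports Defs "HOL-Complex_Analysis.Complex_Analysis"
begin

text \<open>Binomial expansion writes \<open>N(u) u^(-s-1)\<close> as a finite combination \<open>\<Sum>k. c_k u^(-(a_k)-1)\<close>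
  with \<open>a_k = s + k\<close> (for \<open>N\<^sup>*\<close>: \<open>a_k = s - k\<close>) and \<open>c_k = (-1)^k binom r k\<close>.
  Each term has the Mellin-type integral \<open>\<integral>\<^sub>1\<^sup>\<infinity> u^(-a-1) (log u)^(w-1) du = Gamma(w) a^(-w)\<close>,
  so \<open>Z_N(w,s) = \<Sum>k. c_k a_k^(-w)\<close> is entire in \<open>w\<close>, its derivative at \<open>0\<close> is \<open>-\<Sum>k. c_k log a_k\<close>,
  and \<open>zeta_N(s) = \<Prod>k. a_k^(-c_k)\<close>. Reindexing \<open>k \<mapsto> r - k\<close> identifies these products with
  the Soule zeta function; the functional equation (c) is the same reindexing together with
  \<open>\<Sum>k. c_k = (1 - 1)^r = 0\<close>.\<close>

definition log_mellin_kernel :: "complex \<Rightarrow> complex \<Rightarrow> real \<Rightarrow> complex" where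
  "log_mellin_kernel a w u = complex_of_real u powr (-(a + 1)) * of_real (ln u) powr (w - 1)"

lemma norm_log_mellin_kernel:
  assumes "u > 1"
  shows "norm (log_mellin_kernel a w u) = u powr (-(Re a + 1)) * ln u powr (Re w - 1)"
  using assms unfolding log_mellin_kernel_def norm_mult
  by (subst (1 2) norm_powr_real_powr) auto

lemma log_mellin_kernel_shift:
  assumes "u > 1"
  shows "log_mellin_kernel a w u = exp (- b * of_real (ln u)) * log_mellin_kernel (a - b) w u"
proof -
  have "complex_of_real u powr (-(a + 1)) = complex_of_real u powr (-b) * complex_of_real u powr (-(a - b + 1))"
    by (simp flip: powr_add)
  moreover have "complex_of_real u powr (-b) = exp (- b * of_real (ln u))"
    using assms by (simp add: powr_def Ln_of_real)
  ultimately show ?thesis unfolding log_mellin_kernel_def by simp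
qed

lemma ln_power_mult_log_mellin_kernel:
  assumes "u > 1"
  shows "of_real (ln u) ^ n * log_mellin_kernel a w u = log_mellin_kernel a (w + of_nat n) u"
proof -
  have "of_real (ln u) powr (w + of_nat n - 1) = of_real (ln u) powr (of_nat n) * of_real (ln u) powr (w - 1)"
    by (simp flip: powr_add add: algebra_simps)
  moreover have "of_real (ln u) powr (of_nat n) = (of_real (ln u) :: complex) ^ n"
    using assms by (simp add: powr_nat)
  ultimately show ?thesis unfolding log_mellin_kernel_def by (simp add: algebra_simps)
qed

lemma log_mellin_kernel_exp_subst:
  fixes c t :: real and z :: complex
  assumes c: "c > 0" and t: "t > 0"
  shows "\<bar>exp (t/c) / c\<bar> *\<^sub>R log_mellin_kernel (of_real c) z (exp (t/c))
       = of_real c powr (-z) * (of_real t powr (z - 1) / of_real (exp t))"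
proof -
  have "\<bar>exp (t/c) / c\<bar> = exp (t/c - ln c)" using c by (simp add: exp_diff)
  moreover have "complex_of_real (exp (t/c)) powr (-(of_real c + 1)) = exp (-(of_real c + 1) * of_real (t/c))"
    by (simp add: powr_def Ln_of_real)
  moreover have "complex_of_real (ln (exp (t/c))) powr (z - 1) = exp ((z - 1) * of_real (ln t - ln c))"
  proof -
    have "Ln (complex_of_real (t/c)) = of_real (ln (t/c))" using c t by (intro Ln_of_real) auto
    then show ?thesis using c t by (simp add: powr_def ln_div del: of_real_divide)
  qed
  moreover have "of_real t powr (z - 1) = exp ((z - 1) * of_real (ln t))"
    using t by (simp add: powr_def Ln_of_real)
  moreover have "complex_of_real c powr (-z) = exp (- z * of_real (ln c))"
    using c by (simp add: powr_def Ln_of_real)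
  moreover have "complex_of_real (exp t) = exp (of_real t)" by (simp add: exp_of_real)
  ultimately show ?thesis
    using c unfolding log_mellin_kernel_def
    apply (simp add: scaleR_conv_of_real exp_of_real[symmetric] flip: exp_add exp_diff)
    apply (rule arg_cong[where f=exp])
    apply (simp add: field_simps)
    done
qed

text \<open>For real \<open>c\<close> the substitution \<open>u = exp (t/c)\<close> turns the kernel into Euler's integrand
  for \<open>Gamma\<close>.\<close>
lemma log_mellin_integral_real:
  fixes c :: real and z :: complex
  assumes c: "c > 0" and z: "Re z > 0"
  shows "(log_mellin_kernel (of_real c) z has_integral of_real c powr (-z) * Gamma z) {1<..}"
    and "log_mellin_kernel (of_real c) z absolutely_integrable_on {1<..}"
proof -
  define g where "g = (\<lambda>t. of_real c powr (-z) * (of_real t powr (z - 1) / of_real (exp t)))"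
  have img: "(\<lambda>t. exp (t/c)) ` {0<..} = {1<..}"
  proof (intro set_eqI iffI)
    fix u :: real assume "u \<in> {1<..}"
    then have "u = exp ((c * ln u)/c)" "c * ln u > 0" using c by auto
    then show "u \<in> (\<lambda>t. exp (t/c)) ` {0<..}" by blast
  qed (use c in auto)
  have der: "((\<lambda>t. exp (t/c)) has_field_derivative exp (t/c)/c) (at t within {0<..})" for t
    using c by (auto intro!: derivative_eq_intros)
  have inj: "inj_on (\<lambda>t. exp (t/c)) {0<..}" using c by (auto simp: inj_on_def)
  have subst: "\<bar>exp (t/c)/c\<bar> *\<^sub>R log_mellin_kernel (of_real c) z (exp (t/c)) = g t" if "t \<in> {0<..}" for t
    unfolding g_def using c that by (intro log_mellin_kernel_exp_subst) auto
  have "(\<lambda>t. \<bar>exp (t/c)/c\<bar> *\<^sub>R log_mellin_kernel (of_real c) z (exp (t/c))) absolutely_integrable_on {0<..}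
      \<longleftrightarrow> g absolutely_integrable_on {0<..}"
    by (intro set_integrable_cong refl subst)
  moreover have "g absolutely_integrable_on {0<..}"
    unfolding g_def by (intro set_integrable_mult_right absolutely_integrable_Gamma_integral' z)
  ultimately have "(\<lambda>t. \<bar>exp (t/c)/c\<bar> *\<^sub>R log_mellin_kernel (of_real c) z (exp (t/c))) absolutely_integrable_on {0<..}"
    by simp
  moreover have "(g has_integral of_real c powr (-z) * Gamma z) {0<..}"
    unfolding g_def by (intro has_integral_mult_right Gamma_integral_complex' z)
  then have "integral {0<..} (\<lambda>t. \<bar>exp (t/c)/c\<bar> *\<^sub>R log_mellin_kernel (of_real c) z (exp (t/c)))
      = of_real c powr (-z) * Gamma z"
    using subst by (subst integral_cong[of _ _ g]) (auto simp: integral_unique)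
  ultimately have "log_mellin_kernel (of_real c) z absolutely_integrable_on {1<..}
      \<and> integral {1<..} (log_mellin_kernel (of_real c) z) = of_real c powr (-z) * Gamma z"
    using has_absolute_integral_change_of_variables_real[OF _ der inj] unfolding img by auto
  then show "log_mellin_kernel (of_real c) z absolutely_integrable_on {1<..}"
    and "(log_mellin_kernel (of_real c) z has_integral of_real c powr (-z) * Gamma z) {1<..}"
    by (auto simp: has_integral_integral dest: set_lebesgue_integral_eq_integral(1))
qed

lemma norm_exp_partial_sum_le:
  fixes x :: "'a::{real_normed_algebra_1,banach}"
  shows "norm (\<Sum>n<N. x ^ n /\<^sub>R fact n) \<le> exp (norm x)"
proof -
  have "norm (\<Sum>n<N. x ^ n /\<^sub>R fact n) \<le> (\<Sum>n<N. norm x ^ n /\<^sub>R fact n)"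
    by (rule order_trans[OF norm_sum sum_mono]) (simp add: norm_power_ineq divide_right_mono)
  also have "\<dots> \<le> (\<Sum>n. norm x ^ n /\<^sub>R fact n)"
    by (intro sum_le_suminf exp_converges[THEN sums_summable]) auto
  also have "\<dots> = exp (norm x)" by (simp add: exp_def)
  finally show ?thesis .
qed

lemma exists_real_center_disc:
  fixes a :: complex
  assumes a: "Re a > 0"
  obtains c :: real where "c > 0" "cmod (a - of_real c) < c"
proof
  define c where "c = (cmod a)\<^sup>2 / Re a + 1"
  show c: "c > 0" using a unfolding c_def by (simp add: add_nonneg_pos)
  have "(cmod (a - of_real c))\<^sup>2 = (Re a - c)\<^sup>2 + (Im a)\<^sup>2" by (simp add: cmod_power2)
  also have "\<dots> = (cmod a)\<^sup>2 - 2 * c * Re a + c\<^sup>2"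
    using cmod_power2[of a] by (simp add: power2_eq_square algebra_simps)
  also have "2 * c * Re a = 2 * (cmod a)\<^sup>2 + 2 * Re a" using a by (simp add: c_def field_simps)
  finally have "(cmod (a - of_real c))\<^sup>2 < c\<^sup>2" using a zero_le_power2[of "cmod a"] by linarith
  then show "cmod (a - of_real c) < c" using c by (simp add: power_less_imp_less_base)
qed

lemma Gamma_power_series_shift:
  fixes b z :: complex and c :: real
  assumes c: "c > 0" and b: "cmod b < c" and z: "Re z > 0"
  shows "(\<lambda>n. (-b) ^ n / fact n * (of_real c powr (-(z + of_nat n)) * Gamma (z + of_nat n)))
           sums ((of_real c + b) powr (-z) * Gamma z)"
proof -
  have z_nonpole: "z \<notin> \<int>\<^sub>\<le>\<^sub>0" using z by (auto elim!: nonpos_Ints_cases)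
  have "(\<lambda>n. ((-z) gchoose n) * (b / of_real c) ^ n) sums (1 + b / of_real c) powr (-z)"
    using b c by (intro gen_binomial_complex) (simp add: norm_divide)
  then have "(\<lambda>n. of_real c powr (-z) * Gamma z * (((-z) gchoose n) * (b / of_real c) ^ n))
      sums (of_real c powr (-z) * Gamma z * (1 + b / of_real c) powr (-z))"
    by (rule sums_mult)
  moreover have "of_real c powr (-z) * Gamma z * (((-z) gchoose n) * (b / of_real c) ^ n)
      = (-b) ^ n / fact n * (of_real c powr (-(z + of_nat n)) * Gamma (z + of_nat n))" for n
  proof -
    have "Gamma (z + of_nat n) = pochhammer z n * Gamma z"
      using pochhammer_Gamma[OF z_nonpole, of n] Gamma_eq_zero_iff[of z] z_nonpole by (auto simp: field_simps)
    moreover have "complex_of_real c powr (-(z + of_nat n)) = of_real c powr (-z) * inverse (of_real c) ^ n"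
      using c by (simp add: powr_diff powr_nat power_inverse divide_inverse)
    ultimately show ?thesis
      by (simp add: gbinomial_pochhammer power_minus[of b] divide_inverse power_mult_distrib mult_ac)
  qed
  moreover have "of_real c powr (-z) * (1 + b / of_real c) powr (-z) = (of_real c + b) powr (-z)"
  proof -
    have "of_real c + b = of_real c * (1 + b / of_real c)" using c by (simp add: field_simps)
    then show ?thesis using c by (simp add: powr_times_real_left)
  qed
  ultimately show ?thesis by (simp add: mult_ac)
qed

lemma log_mellin_integral_exp_partial_sum:
  fixes b z :: complex and c :: real
  assumes c: "c > 0" and z: "Re z > 0"
  shows "((\<lambda>u. (\<Sum>n<N. (- b * of_real (ln u)) ^ n /\<^sub>R fact n) * log_mellin_kernel (of_real c) z u)
    has_integral (\<Sum>n<N. (-b) ^ n / fact n * (of_real c powr (-(z + of_nat n)) * Gamma (z + of_nat n)))) {1<..}"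
proof -
  have "((\<lambda>u. \<Sum>n<N. (-b) ^ n / fact n * log_mellin_kernel (of_real c) (z + of_nat n) u)
    has_integral (\<Sum>n<N. (-b) ^ n / fact n * (of_real c powr (-(z + of_nat n)) * Gamma (z + of_nat n)))) {1<..}"
    using c z by (intro has_integral_sum has_integral_mult_right log_mellin_integral_real(1)) auto
  moreover have "(\<Sum>n<N. (- b * of_real (ln u)) ^ n /\<^sub>R fact n) * log_mellin_kernel (of_real c) z u
      = (\<Sum>n<N. (-b) ^ n / fact n * log_mellin_kernel (of_real c) (z + of_nat n) u)" if "u \<in> {1<..}" for u
    using that unfolding sum_distrib_right
    by (intro sum.cong refl) (simp add: ln_power_mult_log_mellin_kernel[symmetric] power_minus[of "b * _"] power_minus[of b]
        power_mult_distrib scaleR_conv_of_real divide_inverse mult_ac)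
  ultimately show ?thesis
    by (subst has_integral_cong) auto
qed

lemma norm_exp_partial_sum_log_mellin_kernel_le:
  fixes b z :: complex and c :: real
  assumes u: "u > 1"
  shows "norm ((\<Sum>n<N. (- b * of_real (ln u)) ^ n /\<^sub>R fact n) * log_mellin_kernel (of_real c) z u)
    \<le> norm (log_mellin_kernel (of_real (c - cmod b)) (of_real (Re z)) u)"
proof -
  have "norm ((\<Sum>n<N. (- b * of_real (ln u)) ^ n /\<^sub>R fact n) * log_mellin_kernel (of_real c) z u)
      \<le> exp (cmod b * ln u) * norm (log_mellin_kernel (of_real c) z u)"
    using norm_exp_partial_sum_le[of "- b * of_real (ln u)" N] u
    by (auto simp: norm_mult intro!: mult_right_mono)
  also have "\<dots> = norm (log_mellin_kernel (of_real (c - cmod b)) (of_real (Re z)) u)"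
    using u by (simp add: norm_log_mellin_kernel powr_def algebra_simps flip: exp_add)
  finally show ?thesis .
qed

text \<open>For complex \<open>a\<close> write \<open>a = c + b\<close> with \<open>c\<close> real and \<open>|b| < c\<close>, expand \<open>u powr (-b)\<close> into
  its exponential series, integrate termwise against the real kernel (dominated convergence) and
  sum the result with the generalised binomial theorem.\<close>
lemma log_mellin_integral:
  fixes a z :: complex
  assumes a: "Re a > 0" and z: "Re z > 0"
  shows "(log_mellin_kernel a z has_integral a powr (-z) * Gamma z) {1<..}"
    and "log_mellin_kernel a z absolutely_integrable_on {1<..}"
proof -
  obtain c :: real where c: "c > 0" "cmod (a - of_real c) < c"
    using exists_real_center_disc[OF a] .
  define b where "b = a - of_real c"
  define f where "f N u = (\<Sum>n<N. (- b * of_real (ln u)) ^ n /\<^sub>R fact n) * log_mellin_kernel (of_real c) z u"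
    for N u
  define h where "h u = norm (log_mellin_kernel (of_real (c - cmod b)) (of_real (Re z)) u)" for u
  have f_int: "(f N has_integral
      (\<Sum>n<N. (-b) ^ n / fact n * (of_real c powr (-(z + of_nat n)) * Gamma (z + of_nat n)))) {1<..}" for N
    unfolding f_def by (rule log_mellin_integral_exp_partial_sum[OF c(1) z])
  have h_int: "h integrable_on {1<..}"
    unfolding h_def using log_mellin_integral_real(2)[of "c - cmod b" "of_real (Re z)"] c z
    by (auto simp: b_def absolutely_integrable_on_def)
  have f_bound: "\<forall>u\<in>{1<..}. norm (f N u) \<le> h u" for N
    unfolding f_def h_def using norm_exp_partial_sum_log_mellin_kernel_le by simp
  have f_lim: "\<forall>u\<in>{1<..}. (\<lambda>N. f N u) \<longlonglongrightarrow> log_mellin_kernel a z u"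
  proof
    fix u :: real assume "u \<in> {1<..}"
    moreover have "(\<lambda>N. f N u) \<longlonglongrightarrow> exp (- b * of_real (ln u)) * log_mellin_kernel (of_real c) z u"
      unfolding f_def by (intro tendsto_mult tendsto_const exp_converges[unfolded sums_def])
    ultimately show "(\<lambda>N. f N u) \<longlonglongrightarrow> log_mellin_kernel a z u"
      using log_mellin_kernel_shift[of u a z b] by (simp add: b_def)
  qed
  show integral: "(log_mellin_kernel a z has_integral a powr (-z) * Gamma z) {1<..}"
    using Gamma_power_series_shift[OF c(1) _ z, of b] c(2)
    by (intro has_integral_dominated_convergence[OF f_int h_int f_bound f_lim]) (auto simp: b_def sums_def)
  show "log_mellin_kernel a z absolutely_integrable_on {1<..}"
  proof (rule absolutely_integrable_integrable_bound[OF _ _ h_int])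
    fix u :: real assume "u \<in> {1<..}"
    moreover have "Re a \<ge> c - cmod b"
      using complex_Re_le_cmod[of "of_real c - a"] by (simp add: b_def norm_minus_commute)
    ultimately show "norm (log_mellin_kernel a z u) \<le> h u"
      unfolding h_def by (auto simp: norm_log_mellin_kernel intro!: mult_right_mono powr_mono)
  qed (use integral in blast)
qed

lemma Z_fun_power_sum:
  fixes N :: "real \<Rightarrow> complex" and K :: "'i set" and c a :: "'i \<Rightarrow> complex"
  assumes K: "finite K"
    and N: "\<And>u. u > 1 \<Longrightarrow> N u * of_real u powr (-(s + 1)) = (\<Sum>k\<in>K. c k * of_real u powr (-(a k + 1)))"
    and a: "\<And>k. k \<in> K \<Longrightarrow> Re (a k) > 0"
    and w: "Re w > 0"
  shows "Z_integrable N w s" and "Z_fun N w s = (\<Sum>k\<in>K. c k * a k powr (-w))"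
proof -
  define G where "G u = (\<Sum>k\<in>K. c k * log_mellin_kernel (a k) w u)" for u
  have N_eq_G: "N u * of_real u powr (-(s + 1)) * of_real (ln u) powr (w - 1) = G u" if "u \<in> {1<..}" for u
    using that unfolding G_def log_mellin_kernel_def N[of u, OF that[simplified]] sum_distrib_right
    by (intro sum.cong refl) (simp add: algebra_simps)
  have G_abs_int: "G absolutely_integrable_on {1<..}"
    unfolding G_def using K
    by (intro absolutely_integrable_sum set_integrable_mult_right log_mellin_integral(2) a w) auto
  have "(G has_integral (\<Sum>k\<in>K. c k * (a k powr (-w) * Gamma w))) {1<..}"
    unfolding G_def by (intro has_integral_sum K has_integral_mult_right log_mellin_integral(1) a w)
  then have G_int: "integral {1<..} G = (\<Sum>k\<in>K. c k * (a k powr (-w) * Gamma w))"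
    by (rule integral_unique)
  have G_meas: "(\<lambda>u. indicator {1<..} u *\<^sub>R G u) \<in> borel_measurable lborel"
    unfolding G_def log_mellin_kernel_def by measurable
  have "set_integrable lborel {1<..} G"
    using G_abs_int G_meas unfolding set_integrable_def by (simp add: integrable_completion)
  then show "Z_integrable N w s"
    unfolding Z_integrable_def using N_eq_G by (subst set_integrable_cong) auto
  have "(LINT u:{1<..}|lborel. G u) = (LINT u:{1<..}|lebesgue. G u)"
    unfolding set_lebesgue_integral_def using G_meas by (simp add: integral_completion)
  also have "\<dots> = integral {1<..} G" by (rule set_lebesgue_integral_eq_integral(2)[OF G_abs_int])
  finally have "Z_fun N w s = integral {1<..} G / Gamma w"
    unfolding Z_fun_def using N_eq_G by (subst set_lebesgue_integral_cong[of _ _ _ G]) auto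
  moreover have "Gamma w \<noteq> 0" using w by (auto simp: Gamma_eq_zero_iff elim!: nonpos_Ints_cases)
  ultimately show "Z_fun N w s = (\<Sum>k\<in>K. c k * a k powr (-w))"
    using G_int by (simp add: sum_divide_distrib)
qed

lemma deriv_eq_if_eq_on_right_half_plane:
  fixes g G :: "complex \<Rightarrow> complex"
  assumes U: "open U" "0 \<in> U" and holo: "g holomorphic_on U" "G holomorphic_on U"
    and eq: "\<And>w. w \<in> U \<Longrightarrow> Re w > 0 \<Longrightarrow> g w = G w"
  shows "deriv g 0 = deriv G 0"
proof -
  obtain \<epsilon> where \<epsilon>: "\<epsilon> > 0" "ball 0 \<epsilon> \<subseteq> U" using U open_contains_ball by blast
  have "g w = G w" if "w \<in> ball 0 \<epsilon>" for w
  proof (rule analytic_continuation_open[of "ball 0 \<epsilon> \<inter> {w. Re w > 0}" "ball 0 \<epsilon>" g G])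
    show "open (ball 0 \<epsilon> \<inter> {w. Re w > 0})" by (intro open_Int open_halfspace_Re_gt open_ball)
    have "complex_of_real (\<epsilon>/2) \<in> ball 0 \<epsilon> \<inter> {w. Re w > 0}" using \<epsilon> by auto
    then show "ball 0 \<epsilon> \<inter> {w. Re w > 0} \<noteq> {}" by blast
  qed (use that \<epsilon> holo eq in \<open>auto intro: holomorphic_on_subset\<close>)
  then have "eventually (\<lambda>w. g w = G w) (nhds 0)"
    using \<epsilon>(1) by (intro eventually_nhds_in_open[of "ball 0 \<epsilon>", THEN eventually_mono]) auto
  then show ?thesis by (rule deriv_cong_ev) simp
qed

lemma zeta_N_power_sum:
  fixes N :: "real \<Rightarrow> complex" and K :: "'i set" and c :: "'i \<Rightarrow> int" and a :: "'i \<Rightarrow> complex"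
  assumes K: "finite K"
    and N: "\<And>u. u > 1 \<Longrightarrow> N u * of_real u powr (-(s + 1)) = (\<Sum>k\<in>K. of_int (c k) * of_real u powr (-(a k + 1)))"
    and a: "\<And>k. k \<in> K \<Longrightarrow> Re (a k) > 0"
  shows "zeta_N N s = (\<Prod>k\<in>K. a k powi (- c k))"
proof -
  have a_nz: "a k \<noteq> 0" if "k \<in> K" for k using a[OF that] by auto
  define G where "G w = (\<Sum>k\<in>K. of_int (c k) * exp (- w * Ln (a k)))" for w
  have G_holo: "G holomorphic_on UNIV" unfolding G_def by (intro holomorphic_intros)
  have Z_eq_G: "Z_integrable N w s \<and> G w = Z_fun N w s" if "Re w > 0" for w
    using Z_fun_power_sum[OF K N a that] a_nz unfolding G_def by (auto simp: powr_def intro!: sum.cong)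
  have "(G has_field_derivative (\<Sum>k\<in>K. of_int (c k) * (exp (- 0 * Ln (a k)) * (- Ln (a k))))) (at 0)"
    unfolding G_def by (auto intro!: derivative_eq_intros sum.cong simp: mult.commute)
  then have G_deriv: "deriv G 0 = - (\<Sum>k\<in>K. of_int (c k) * Ln (a k))"
    by (simp add: DERIV_imp_deriv sum_negf)
  have "(THE d. \<exists>g U. open U \<and> 0 \<in> U \<and> g holomorphic_on U \<and>
          (\<forall>w\<in>U. 0 < Re w \<longrightarrow> Z_integrable N w s \<and> g w = Z_fun N w s) \<and> d = deriv g 0)
      = deriv G 0"
  proof (rule the_equality)
    show "\<exists>g U. open U \<and> 0 \<in> U \<and> g holomorphic_on U \<and>
        (\<forall>w\<in>U. 0 < Re w \<longrightarrow> Z_integrable N w s \<and> g w = Z_fun N w s) \<and> deriv G 0 = deriv g 0"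
      using G_holo Z_eq_G by blast
  next
    fix d assume "\<exists>g U. open U \<and> 0 \<in> U \<and> g holomorphic_on U \<and>
        (\<forall>w\<in>U. 0 < Re w \<longrightarrow> Z_integrable N w s \<and> g w = Z_fun N w s) \<and> d = deriv g 0"
    then obtain g U where "open U" "0 \<in> U" "g holomorphic_on U" "d = deriv g 0"
      and "\<forall>w\<in>U. 0 < Re w \<longrightarrow> g w = Z_fun N w s" by blast
    then show "d = deriv G 0"
      using Z_eq_G G_holo by (metis deriv_eq_if_eq_on_right_half_plane holomorphic_on_subset subset_UNIV)
  qed
  then have "zeta_N N s = exp (\<Sum>k\<in>K. of_int (- c k) * Ln (a k))"
    unfolding zeta_N_def G_deriv by (simp add: sum_negf)
  also have "\<dots> = (\<Prod>k\<in>K. a k powi (- c k))"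
    using a_nz by (simp add: exp_sum[OF K] complex_powr_of_int[symmetric] powr_def)
  finally show ?thesis .
qed

definition signed_binomial :: "nat \<Rightarrow> nat \<Rightarrow> int" where
  "signed_binomial r k = int (r choose k) * (-1) ^ k"

lemma one_minus_powr_power_times_powr:
  fixes u :: real and e s :: complex
  assumes u: "u > 0"
  shows "(1 - of_real u powr e) ^ r * of_real u powr (-(s + 1))
       = (\<Sum>k\<in>{0..r}. of_int (signed_binomial r k) * of_real u powr (-((s - of_nat k * e) + 1)))"
proof -
  have powr_power: "(complex_of_real u powr e) ^ k = of_real u powr (of_nat k * e)" for k
    using u by (simp add: powr_def exp_of_nat_mult[symmetric] mult_ac)
  have "(1 - of_real u powr e) ^ r = (\<Sum>k\<le>r. of_nat (r choose k) * (- (of_real u powr e)) ^ k * 1 ^ (r - k))"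
    using binomial_ring[of "- (of_real u powr e)" 1 r] by simp
  also have "\<dots> = (\<Sum>k\<le>r. of_int (signed_binomial r k) * of_real u powr (of_nat k * e))"
    unfolding signed_binomial_def by (intro sum.cong refl) (simp add: power_minus[of "_ powr e"] powr_power)
  finally have binomial: "(1 - of_real u powr e) ^ r
      = (\<Sum>k\<le>r. of_int (signed_binomial r k) * of_real u powr (of_nat k * e))" .
  show ?thesis
    unfolding binomial atLeast0AtMost sum_distrib_right mult.assoc powr_add[symmetric]
    by (intro sum.cong refl) (simp add: algebra_simps)
qed

lemma zeta_N_one_minus_powr_power:
  fixes N :: "real \<Rightarrow> complex" and e s :: complex
  assumes N: "\<And>u. u > 1 \<Longrightarrow> N u = (1 - of_real u powr e) ^ r"
    and s: "\<And>k. k \<le> r \<Longrightarrow> Re (s - of_nat k * e) > 0"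
  shows "zeta_N N s = (\<Prod>k\<in>{0..r}. (s - of_nat k * e) powi (- signed_binomial r k))"
proof (rule zeta_N_power_sum[where a = "\<lambda>k. s - of_nat k * e"])
  fix u :: real assume "u > 1"
  then show "N u * of_real u powr (-(s + 1))
      = (\<Sum>k\<in>{0..r}. of_int (signed_binomial r k) * of_real u powr (-((s - of_nat k * e) + 1)))"
    using N one_minus_powr_power_times_powr[of u e r s] by simp
qed (use s in auto)

lemma prod_power_int_distrib:
  fixes f :: "'i \<Rightarrow> 'a::field"
  assumes "finite A"
  shows "(\<Prod>i\<in>A. f i) powi n = (\<Prod>i\<in>A. f i powi n)"
  using assms by induction (auto simp: power_int_mult_distrib)

lemma prod_power_int_eq_power_int_sum:
  fixes x :: "'a::field"
  assumes "finite A" "x \<noteq> 0"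
  shows "(\<Prod>i\<in>A. x powi m i) = x powi (\<Sum>i\<in>A. m i)"
  using assms by induction (auto simp: power_int_add)

lemma a_coeff_reflect: "k \<le> r \<Longrightarrow> a_coeff r (r - k) = signed_binomial r k"
  unfolding a_coeff_def signed_binomial_def by (simp add: binomial_symmetric[symmetric])

lemma a_coeff_times_sign: "k \<le> r \<Longrightarrow> a_coeff r k * (-1) ^ r = signed_binomial r k"
proof -
  assume "k \<le> r"
  then have "(-1::int) ^ r = (-1) ^ (r - k) * (-1) ^ k" by (simp flip: power_add)
  then have "a_coeff r k * (-1) ^ r = int (r choose k) * ((-1) ^ (r - k) * (-1) ^ (r - k)) * (-1) ^ k"
    unfolding a_coeff_def by (simp add: mult_ac)
  also have "(-1::int) ^ (r - k) * (-1) ^ (r - k) = 1" by (simp flip: power_add)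
  finally show ?thesis by (simp add: signed_binomial_def)
qed

lemma zeta_Gm_shift:
  "zeta_Gm r (s + of_nat r) = (\<Prod>k\<in>{0..r}. (s + of_nat k) powi (- signed_binomial r k))"
proof -
  have "zeta_Gm r (s + of_nat r) = (\<Prod>k\<in>{0..r}. (s + of_nat r - of_nat (r - k)) powi (- a_coeff r (r - k)))"
    unfolding zeta_Gm_def
    using prod.atLeastAtMost_rev[of "\<lambda>j. (s + of_nat r - of_nat j) powi (- a_coeff r j)" 0 r] by simp
  also have "\<dots> = (\<Prod>k\<in>{0..r}. (s + of_nat k) powi (- signed_binomial r k))"
    by (intro prod.cong refl) (auto simp: a_coeff_reflect of_nat_diff)
  finally show ?thesis .
qed

lemma zeta_Gm_power_int_sign:
  "zeta_Gm r s powi ((-1) ^ r) = (\<Prod>k\<in>{0..r}. (s - of_nat k) powi (- signed_binomial r k))"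
  unfolding zeta_Gm_def prod_power_int_distrib[OF finite_atLeastAtMost]
  by (intro prod.cong refl) (simp add: a_coeff_times_sign flip: power_int_mult)

lemma zeta_Gm_reflection:
  assumes "r \<ge> 1"
  shows "zeta_Gm r (of_nat r - s) = zeta_Gm r s powi ((-1) ^ r)"
proof -
  have "zeta_Gm r (of_nat r - s) = (\<Prod>k\<in>{0..r}. (- (s - of_nat k)) powi (- signed_binomial r k))"
    using zeta_Gm_shift[of r "- s"] by simp
  also have "\<dots> = (\<Prod>k\<in>{0..r}. (-1) powi (- signed_binomial r k))
      * (\<Prod>k\<in>{0..r}. (s - of_nat k) powi (- signed_binomial r k))"
    by (subst prod.distrib[symmetric]) (simp add: power_int_mult_distrib[symmetric])
  also have "\<dots> = (-1) powi (\<Sum>k\<in>{0..r}. - signed_binomial r k) * zeta_Gm r s powi ((-1) ^ r)"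
    using prod_power_int_eq_power_int_sum[of "{0..r}" "-1 :: complex"] by (simp add: zeta_Gm_power_int_sign)
  also have "(\<Sum>k\<in>{0..r}. - signed_binomial r k) = 0"
    using choose_alternating_sum[of r] assms
    by (simp add: signed_binomial_def atLeast0AtMost sum_negf mult.commute)
  finally show ?thesis by simp
qed

theorem proposition3p8:
  fixes r :: nat and N :: "real \<Rightarrow> complex"
  assumes "r \<ge> 1"
    and "N = (\<lambda>u. (1 - 1 / complex_of_real u) ^ r)"
  shows "(\<forall>s. of_nat r < Re s \<longrightarrow> zeta_N N s = zeta_Gm r (s + of_nat r))
       \<and> (\<forall>s. of_nat r < Re s \<longrightarrow> zeta_N (\<lambda>u. N (1 / u)) s = zeta_Gm r s powi ((-1) ^ r))
       \<and> (\<forall>s. s \<notin> of_nat ` {0..r} \<longrightarrow> zeta_Gm r (of_nat r - s) = zeta_Gm r s powi ((-1) ^ r))"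
proof (intro conjI allI impI)
  fix s :: complex assume s: "of_nat r < Re s"
  have "N u = (1 - of_real u powr (-1)) ^ r" if "u > 1" for u
    using that by (simp add: assms(2) powr_minus divide_inverse)
  then have "zeta_N N s = (\<Prod>k\<in>{0..r}. (s + of_nat k) powi (- signed_binomial r k))"
    using s by (subst zeta_N_one_minus_powr_power[where e = "-1"]) auto
  then show "zeta_N N s = zeta_Gm r (s + of_nat r)"
    by (simp add: zeta_Gm_shift)
  have "zeta_N (\<lambda>u. N (1 / u)) s = (\<Prod>k\<in>{0..r}. (s - of_nat k) powi (- signed_binomial r k))"
    using s by (subst zeta_N_one_minus_powr_power[where e = 1]) (auto simp: assms(2))
  then show "zeta_N (\<lambda>u. N (1 / u)) s = zeta_Gm r s powi ((-1) ^ r)"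
    by (simp add: zeta_Gm_power_int_sign)
next
  \<comment> \<open>The poles need not be excluded: there both sides vanish, as \<open>0 powi n = 0\<close> for \<open>n \<noteq> 0\<close>.\<close>
  fix s :: complex
  show "zeta_Gm r (of_nat r - s) = zeta_Gm r s powi ((-1) ^ r)"
    using assms(1) by (rule zeta_Gm_reflection)
qed

end
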